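(* Let $c$ and $n$ be odd positive integers with $n>c$, and set $N=n-c-1$. There is a bijection between standard Young tableaux of shape with $2$ rows and $N$ columns and lattice paths in an $N\times N$ grid from the top-left corner to the bottom-right corner, using unit right and down steps and never going strictly below the diagonal joining these two corners, such that the parity of the number of unit squares of the grid lying above the path equals the parity of the Latin reading word of the corresponding tableau.
   Context: Young tableaux are standard, in English notation, with entries $1,\ldots,2N$. The Latin reading word of a tableau is obtained by reading its entries row by row from top to bottom, each row left to right; its parity is its sign as a permutation of $\{1,\ldots,2N\}$. *)

theory Defs
  imports "HOL-Combinatorics.Permutations"
begin

text \<open>Cells of the two-row shape with N columns: (row, column), rows 0,1 (0 = top),
  columns 0..N-1 (English notation).\<close>
definition cells2 :: "nat \<Rightarrow> (nat \<times> nat) set" where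
  "cells2 N = {(r, j). r < 2 \<and> j < N}"

text \<open>Standard Young tableaux of shape (N,N): a filling of the cells bijective onto
  {1..2N}, strictly increasing along rows (left to right) and down columns;
  the function is 0 outside the shape (so that tableaux are determined by their entries).\<close>
definition syt2 :: "nat \<Rightarrow> (nat \<times> nat \<Rightarrow> nat) set" where
  "syt2 N = {T. bij_betw T (cells2 N) {1..2*N}
      \<and> (\<forall>x. x \<notin> cells2 N \<longrightarrow> T x = 0)
      \<and> (\<forall>r j. r < 2 \<and> Suc j < N \<longrightarrow> T (r, j) < T (r, Suc j))
      \<and> (\<forall>j. j < N \<longrightarrow> T (0, j) < T (1, j))}"

definition reading_word :: "nat \<Rightarrow> (nat \<times> nat \<Rightarrow> nat) \<Rightarrow> nat list" where
  "reading_word N T = map (\<lambda>j. T (0, j)) [0..<N] @ map (\<lambda>j. T (1, j)) [0..<N]"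

definition reading_perm :: "nat \<Rightarrow> (nat \<times> nat \<Rightarrow> nat) \<Rightarrow> nat \<Rightarrow> nat" where
  "reading_perm N T = (\<lambda>i. if 1 \<le> i \<and> i \<le> 2*N then reading_word N T ! (i - 1) else i)"

text \<open>Lattice paths in the N x N grid from the top-left to the bottom-right corner,
  as step lists (True = unit right step, False = unit down step), never going strictly
  below the diagonal joining these corners: every prefix has at least as many right
  steps as down steps.\<close>
definition paths :: "nat \<Rightarrow> bool list set" where
  "paths N = {p. length p = 2*N \<and> count_list p True = N \<and> count_list p False = N
      \<and> (\<forall>k \<le> 2*N. count_list (take k p) False \<le> count_list (take k p) True)}"

text \<open>Number of unit squares of the grid lying above the path: the down step crossing a
  row at horizontal position x (number of right steps before it) has N - x squares of that
  row above/right of the path.\<close>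
definition area_above :: "nat \<Rightarrow> bool list \<Rightarrow> nat" where
  "area_above N p = (\<Sum>k\<in>{k. k < length p \<and> \<not> p ! k}. N - count_list (take k p) True)"

end

theory Submission
  imports Defs
begin

text \<open>
  The path of a tableau takes a right step at time k exactly when k lies in the top row; the
  ballot condition on its prefixes is then the column condition of the tableau, and the positions
  of the right steps and of the down steps give back the two rows. The down step of a bottom-row
  entry b lies in a grid row with N - #{top entries < b} = #{top entries > b} squares above the
  path, and the pairs (top entry a, bottom entry b) with b < a are exactly the inversions of the
  reading word. So the area above the path is the number of inversions of the reading word,
  whose parity is the sign of the reading word.
\<close>

section \<open>Inversions and the sign of a word\<close>

definition word_perm :: "nat list \<Rightarrow> nat \<Rightarrow> nat" where
  "word_perm w = (\<lambda>i. if 1 \<le> i \<and> i \<le> length w then w ! (i - 1) else i)"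

definition inversions :: "'a::linorder list \<Rightarrow> (nat \<times> nat) set" where
  "inversions w = {(i, j). i < j \<and> j < length w \<and> w ! j < w ! i}"

lemma finite_inversions: "finite (inversions w)"
  by (rule finite_subset[of _ "{..<length w} \<times> {..<length w}"]) (auto simp: inversions_def)

lemma inversions_empty_iff_sorted: "inversions w = {} \<longleftrightarrow> sorted w"
  unfolding inversions_def sorted_iff_nth_mono_less by (auto simp: not_less[symmetric])

lemma word_perm_permutes:
  assumes "distinct w" "set w = {1..length w}"
  shows "word_perm w permutes {1..length w}"
proof (rule bij_imp_permutes)
  have "word_perm w ` {1..length w} = word_perm w ` Suc ` {..<length w}"
    by (simp add: image_Suc_lessThan)
  also have "\<dots> = (\<lambda>i. w ! i) ` {..<length w}"
    unfolding image_image by (rule image_cong) (auto simp: word_perm_def)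
  also have "\<dots> = set w"
    by (auto simp: set_conv_nth)
  finally have "word_perm w ` {1..length w} = set w" .
  moreover have "inj_on (word_perm w) {1..length w}"
    using assms(1) by (auto simp: inj_on_def word_perm_def nth_eq_iff_index_eq)
  ultimately show "bij_betw (word_perm w) {1..length w} {1..length w}"
    using assms(2) by (simp add: bij_betw_def)
qed (auto simp: word_perm_def)

lemma word_perm_sorted:
  assumes "sorted w" "distinct w" "set w = {1..length w}"
  shows "word_perm w = id"
proof -
  have sorted_word: "w = [1..<Suc (length w)]"
    using assms(3) by (intro sorted_distinct_set_unique[OF assms(1,2) sorted_upt distinct_upt])
      (simp only: set_upt atLeastLessThanSuc_atLeastAtMost)
  have "w ! i = Suc i" if "i < length w" for i
  proof -
    have "w ! i = [1..<Suc (length w)] ! i"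
      using sorted_word by (rule arg_cong)
    also have "\<dots> = Suc i"
      using that by (simp del: upt_Suc)
    finally show ?thesis .
  qed
  then show ?thesis
    by (auto simp: word_perm_def fun_eq_iff Suc_le_eq)
qed

lemma transpose_Suc_less:
  "a < b \<Longrightarrow> (a, b) \<noteq> (i, Suc i) \<Longrightarrow>
    Transposition.transpose i (Suc i) a < Transposition.transpose i (Suc i) b"
  by (auto simp: transpose_def)

lemma transpose_Suc_permutes:
  "Suc i < n \<Longrightarrow> Transposition.transpose i (Suc i) permutes {..<n}"
  by (simp add: permutes_swap_id)

lemma inversions_swap_adjacent:
  fixes w :: "'a::linorder list" and i :: nat
  defines "t \<equiv> Transposition.transpose i (Suc i)"
  assumes "Suc i < length w" "(a, b) \<in> inversions w" "(a, b) \<noteq> (i, Suc i)"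
  shows "(t a, t b) \<in> inversions (permute_list t w)"
proof -
  have t: "t permutes {..<length w}"
    using assms(2) by (simp add: t_def transpose_Suc_permutes)
  have "a < b" "b < length w" "w ! b < w ! a"
    using assms(3) by (auto simp: inversions_def)
  moreover have "t a < t b"
    using assms(4) \<open>a < b\<close> by (simp add: t_def transpose_Suc_less)
  moreover have "t b < length w"
    using permutes_in_image[OF t] \<open>b < length w\<close> by simp
  ultimately show ?thesis
    using permute_list_nth[OF t] t_def by (auto simp: inversions_def)
qed

lemma card_inversions_swap_descent:
  fixes w :: "'a::linorder list" and i :: nat
  defines "t \<equiv> Transposition.transpose i (Suc i)"
  assumes "Suc i < length w" "w ! Suc i < w ! i"
  shows "card (inversions w) = Suc (card (inversions (permute_list t w)))"
proof -
  let ?h = "\<lambda>(a, b). (t a, t b)" and ?w' = "permute_list t w"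
  have t: "t permutes {..<length w}"
    using assms(2) by (simp add: t_def transpose_Suc_permutes)
  have inj: "inj_on ?h A" for A
    by (rule inj_on_inverseI[where g = ?h]) (auto simp: t_def)
  have w'': "permute_list t ?w' = w"
    using permute_list_compose[OF t, of t, symmetric] by (simp add: t_def)
  have descent: "(i, Suc i) \<in> inversions w" and ascent: "(i, Suc i) \<notin> inversions ?w'"
    using assms(2,3) permute_list_nth[OF t] by (auto simp: inversions_def t_def)
  have "?h ` (inversions w - {(i, Suc i)}) \<subseteq> inversions ?w'"
    using inversions_swap_adjacent[OF assms(2)] by (auto simp: t_def)
  moreover have "?h ` inversions ?w' \<subseteq> inversions w - {(i, Suc i)}"
  proof clarify
    fix a b assume ab: "(a, b) \<in> inversions ?w'"
    then have "(t a, t b) \<in> inversions w"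
      using inversions_swap_adjacent[of i ?w' a b] ascent assms(2) w'' by (auto simp: t_def)
    moreover have "a < b"
      using ab by (simp add: inversions_def)
    then have "(t a, t b) \<noteq> (i, Suc i)"
      by (auto simp: t_def transpose_def split: if_splits)
    ultimately show "(t a, t b) \<in> inversions w - {(i, Suc i)}" by simp
  qed
  ultimately have "card (inversions w - {(i, Suc i)}) = card (inversions ?w')"
    by (intro antisym card_inj_on_le[OF inj]) (auto simp: finite_inversions)
  then show ?thesis
    using card_Suc_Diff1[OF finite_inversions descent] by simp
qed

lemma adjacent_descent_if_inversions:
  assumes "inversions w \<noteq> {}"
  obtains i where "Suc i < length w" "w ! Suc i < w ! i"
  using assms unfolding inversions_empty_iff_sorted sorted_iff_nth_Suc by (auto simp: not_le)

lemma word_perm_swap_adjacent: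
  assumes "Suc i < length w"
  shows "word_perm (permute_list (Transposition.transpose i (Suc i)) w)
    = word_perm w \<circ> Transposition.transpose (Suc i) (Suc (Suc i))"
proof
  fix x
  have t: "Transposition.transpose i (Suc i) permutes {..<length w}"
    using assms by (rule transpose_Suc_permutes)
  show "word_perm (permute_list (Transposition.transpose i (Suc i)) w) x
    = (word_perm w \<circ> Transposition.transpose (Suc i) (Suc (Suc i))) x"
    using assms permute_list_nth[OF t, of "x - 1"]
    by (cases "x = Suc i \<or> x = Suc (Suc i)") (auto simp: word_perm_def transpose_def)
qed

lemma evenperm_word_perm_iff:
  assumes "distinct w" "set w = {1..length w}"
  shows "evenperm (word_perm w) \<longleftrightarrow> even (card (inversions w))"
  using assms
proof (induction "card (inversions w)" arbitrary: w)
  case 0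
  then have "sorted w"
    using finite_inversions[of w] by (simp flip: inversions_empty_iff_sorted)
  then show ?case
    using 0 word_perm_sorted by simp
next
  case (Suc m)
  then have "inversions w \<noteq> {}" by auto
  then obtain i where i: "Suc i < length w" "w ! Suc i < w ! i"
    by (rule adjacent_descent_if_inversions)
  define t where "t = Transposition.transpose i (Suc i)"
  have t: "t permutes {..<length w}"
    using i(1) by (simp add: t_def transpose_Suc_permutes)
  have card: "card (inversions w) = Suc (card (inversions (permute_list t w)))"
    using card_inversions_swap_descent[OF i] by (simp add: t_def)
  have "evenperm (word_perm (permute_list t w)) \<longleftrightarrow> even (card (inversions (permute_list t w)))"
    using Suc t card by auto
  moreover have "evenperm (word_perm (permute_list t w)) \<longleftrightarrow> \<not> evenperm (word_perm w)"
    using evenperm_comp[OF permutes_imp_permutation[OF _ word_perm_permutes[OF Suc.prems]]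
        permutation_swap_id, of "Suc i" "Suc (Suc i)"]
    by (simp add: t_def word_perm_swap_adjacent[OF i(1)] evenperm_swap)
  ultimately show ?case
    using card by auto
qed

section \<open>Positions of the steps of a path\<close>

lemma count_list_take:
  assumes "k \<le> length p"
  shows "count_list (take k p) x = card {l. l < k \<and> p ! l = x}"
proof -
  have "count_list (take k p) x = card {l. l < length (take k p) \<and> x = take k p ! l}"
    by (simp add: count_list_eq_length_filter length_filter_conv_card)
  also have "\<dots> = card {l. l < k \<and> p ! l = x}"
    using assms by (intro arg_cong[where f = card]) auto
  finally show ?thesis .
qed

lemma sorted_wrt_less_nth_less_iff:
  fixes xs :: "'a::linorder list"
  assumes "sorted_wrt (<) xs" "i < length xs" "j < length xs"
  shows "xs ! i < xs ! j \<longleftrightarrow> i < j"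
proof (cases i j rule: linorder_cases)
  case greater
  then show ?thesis
    using sorted_wrt_nth_less[OF assms(1) greater assms(2)] by simp
qed (use sorted_wrt_nth_less[OF assms(1) _ assms(3)] in simp_all)

lemma card_less_nth_sorted:
  fixes xs :: "'a::linorder list"
  assumes "sorted_wrt (<) xs" "j < length xs"
  shows "card {x \<in> set xs. x < xs ! j} = j"
proof -
  have less_iff: "i < length xs \<Longrightarrow> xs ! i < xs ! j \<longleftrightarrow> i < j" for i
    using assms by (simp add: sorted_wrt_less_nth_less_iff)
  have "{x \<in> set xs. x < xs ! j} = (\<lambda>i. xs ! i) ` {..<j}"
  proof (intro equalityI subsetI)
    fix x assume "x \<in> {x \<in> set xs. x < xs ! j}"
    then obtain i where "i < length xs" "x = xs ! i" "xs ! i < xs ! j"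
      by (auto simp: in_set_conv_nth)
    then show "x \<in> (\<lambda>i. xs ! i) ` {..<j}"
      using less_iff by auto
  next
    fix x assume "x \<in> (\<lambda>i. xs ! i) ` {..<j}"
    then obtain i where "i < j" "x = xs ! i"
      by auto
    then show "x \<in> {x \<in> set xs. x < xs ! j}"
      using assms(2) less_iff[of i] by auto
  qed
  moreover have "inj_on (\<lambda>i. xs ! i) {..<j}"
    using assms by (intro inj_on_nth) (auto simp: strict_sorted_iff)
  ultimately show ?thesis
    by (simp add: card_image)
qed

definition step_positions :: "bool list \<Rightarrow> bool \<Rightarrow> nat list" where
  "step_positions p b = filter (\<lambda>k. p ! k = b) [0..<length p]"

lemma set_step_positions: "set (step_positions p b) = {k. k < length p \<and> p ! k = b}"
  by (auto simp: step_positions_def)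

lemma sorted_step_positions: "sorted_wrt (<) (step_positions p b)"
  unfolding step_positions_def by (rule sorted_wrt_filter) simp

lemma length_step_positions: "length (step_positions p b) = count_list p b"
proof -
  have "length (step_positions p b) = card (set (step_positions p b))"
    by (simp only: step_positions_def distinct_card[OF distinct_filter[OF distinct_upt]])
  then show ?thesis
    using count_list_take[of "length p" p b] by (simp add: set_step_positions)
qed

lemma count_list_take_step_positions:
  "k \<le> length p \<Longrightarrow> count_list (take k p) b = card {l \<in> set (step_positions p b). l < k}"
  by (simp add: count_list_take set_step_positions) (metis (lifting) order_less_le_trans)

section \<open>Two-row standard Young tableaux\<close>

definition row_entries :: "nat \<Rightarrow> (nat \<times> nat \<Rightarrow> nat) \<Rightarrow> nat \<Rightarrow> nat set" where
  "row_entries N T r = (\<lambda>j. T (r, j)) ` {..<N}"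

lemma cells2_eq: "cells2 N = {0, 1} \<times> {..<N}"
  by (auto simp: cells2_def)

lemma syt2_entry_range:
  assumes "T \<in> syt2 N" "r < 2" "j < N"
  shows "1 \<le> T (r, j)" "T (r, j) \<le> 2 * N"
proof -
  have "T (r, j) \<in> T ` cells2 N"
    using assms(2,3) by (auto simp: cells2_def)
  then show "1 \<le> T (r, j)" "T (r, j) \<le> 2 * N"
    using assms(1) by (auto simp: syt2_def bij_betw_def)
qed

lemma syt2_row_less:
  assumes "T \<in> syt2 N" "r < 2" "i < j" "j < N"
  shows "T (r, i) < T (r, j)"
  using assms(3,4)
proof (induction j)
  case (Suc j)
  then have "T (r, j) < T (r, Suc j)"
    using assms(1,2) by (auto simp: syt2_def)
  with Suc show ?case
    by (cases "i = j") auto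
qed simp

lemma syt2_row_less_iff:
  assumes "T \<in> syt2 N" "r < 2" "i < N" "j < N"
  shows "T (r, i) < T (r, j) \<longleftrightarrow> i < j"
  using syt2_row_less[OF assms(1,2)] assms(3,4) by (metis less_asym' linorder_neqE_nat)

lemma syt2_row_inj:
  assumes "T \<in> syt2 N" "r < 2"
  shows "inj_on (\<lambda>j. T (r, j)) {..<N}"
  using syt2_row_less_iff[OF assms]
  by (intro inj_onI) (metis lessThan_iff linorder_neqE_nat order_less_irrefl)

lemma syt2_column_less:
  "T \<in> syt2 N \<Longrightarrow> j < N \<Longrightarrow> T (0, j) < T (1, j)"
  by (simp add: syt2_def)

lemma syt2_rows_disjoint:
  assumes "T \<in> syt2 N"
  shows "row_entries N T 0 \<inter> row_entries N T 1 = {}"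
proof -
  have "inj_on T (cells2 N)"
    using assms by (simp add: syt2_def bij_betw_def)
  then show ?thesis
    by (auto simp: row_entries_def cells2_def dest: inj_onD)
qed

lemma syt2_rows_union:
  assumes "T \<in> syt2 N"
  shows "row_entries N T 0 \<union> row_entries N T 1 = {1..2 * N}"
proof -
  have "row_entries N T 0 \<union> row_entries N T 1 = T ` cells2 N"
    by (auto simp: row_entries_def cells2_eq)
  then show ?thesis
    using assms by (simp add: syt2_def bij_betw_def)
qed

lemma syt2_row_shifted_entries:
  assumes "T \<in> syt2 N" "r < 2"
  shows "{l. l < k \<and> Suc l \<in> row_entries N T r} = (\<lambda>j. T (r, j) - 1) ` {j. j < N \<and> T (r, j) \<le> k}"
proof
  show "{l. l < k \<and> Suc l \<in> row_entries N T r} \<subseteq> (\<lambda>j. T (r, j) - 1) ` {j. j < N \<and> T (r, j) \<le> k}"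
    unfolding row_entries_def
  proof clarify
    fix l j assume "l < k" "j < N" "Suc l = T (r, j)"
    then show "l \<in> (\<lambda>j. T (r, j) - 1) ` {j. j < N \<and> T (r, j) \<le> k}"
      by (intro image_eqI[of _ _ j]) auto
  qed
  show "(\<lambda>j. T (r, j) - 1) ` {j. j < N \<and> T (r, j) \<le> k} \<subseteq> {l. l < k \<and> Suc l \<in> row_entries N T r}"
  proof clarify
    fix j assume "j < N" "T (r, j) \<le> k"
    moreover have "1 \<le> T (r, j)"
      using syt2_entry_range(1)[OF assms \<open>j < N\<close>] .
    ultimately show "T (r, j) - 1 < k \<and> Suc (T (r, j) - 1) \<in> row_entries N T r"
      by (auto simp: row_entries_def)
  qed
qed

lemma syt2_row_shifted_inj:
  assumes "T \<in> syt2 N" "r < 2"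
  shows "inj_on (\<lambda>j. T (r, j) - 1) {..<N}"
proof (rule inj_onI)
  fix i j assume ij: "i \<in> {..<N}" "j \<in> {..<N}" "T (r, i) - 1 = T (r, j) - 1"
  moreover have "1 \<le> T (r, i)" "1 \<le> T (r, j)"
    using ij(1,2) syt2_entry_range(1)[OF assms] by auto
  ultimately have "T (r, i) = T (r, j)"
    by arith
  then show "i = j"
    using inj_onD[OF syt2_row_inj[OF assms]] ij(1,2) by blast
qed

section \<open>The bijection\<close>

definition tableau_path :: "nat \<Rightarrow> (nat \<times> nat \<Rightarrow> nat) \<Rightarrow> bool list" where
  "tableau_path N T = map (\<lambda>k. Suc k \<in> row_entries N T 0) [0..<2 * N]"

lemma length_tableau_path [simp]: "length (tableau_path N T) = 2 * N"
  by (simp add: tableau_path_def)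

lemma tableau_path_nth_eq_iff:
  assumes "T \<in> syt2 N" "r < 2" "k < 2 * N"
  shows "tableau_path N T ! k = (r = 0) \<longleftrightarrow> Suc k \<in> row_entries N T r"
proof -
  have "Suc k \<in> row_entries N T 0 \<union> row_entries N T 1"
    using assms(3) syt2_rows_union[OF assms(1)] by simp
  then show ?thesis
    using assms(2,3) syt2_rows_disjoint[OF assms(1)]
    by (auto simp: tableau_path_def less_2_cases_iff)
qed

lemma count_list_take_tableau_path:
  assumes "T \<in> syt2 N" "r < 2" "k \<le> 2 * N"
  shows "count_list (take k (tableau_path N T)) (r = 0) = card {j. j < N \<and> T (r, j) \<le> k}"
proof -
  have "count_list (take k (tableau_path N T)) (r = 0)
      = card {l. l < k \<and> tableau_path N T ! l = (r = 0)}"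
    using assms(3) by (simp add: count_list_take)
  also have "\<dots> = card {l. l < k \<and> Suc l \<in> row_entries N T r}"
  proof (intro arg_cong[where f = card] Collect_cong conj_cong refl)
    fix l assume "l < k"
    then show "(tableau_path N T ! l = (r = 0)) = (Suc l \<in> row_entries N T r)"
      using assms(3) by (intro tableau_path_nth_eq_iff[OF assms(1,2)]) simp
  qed
  also have "\<dots> = card {j. j < N \<and> T (r, j) \<le> k}"
    unfolding syt2_row_shifted_entries[OF assms(1,2)]
    by (rule card_image) (rule inj_on_subset[OF syt2_row_shifted_inj[OF assms(1,2)]], auto)
  finally show ?thesis .
qed

lemma tableau_path_in_paths:
  assumes "T \<in> syt2 N"
  shows "tableau_path N T \<in> paths N"
proof -
  let ?p = "tableau_path N T"
  have full: "{j. j < N \<and> T (r, j) \<le> 2 * N} = {..<N}" if "r < 2" for r :: nat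
    using syt2_entry_range(2)[OF assms that] by auto
  have "count_list ?p (r = 0) = N" if "r < 2" for r :: nat
    using count_list_take_tableau_path[OF assms that order.refl] full[OF that] by simp
  from this[of 0] this[of 1] have "count_list ?p True = N" "count_list ?p False = N"
    by simp_all
  moreover have "count_list (take k ?p) False \<le> count_list (take k ?p) True" if "k \<le> 2 * N" for k
  proof -
    have "{j. j < N \<and> T (1, j) \<le> k} \<subseteq> {j. j < N \<and> T (0, j) \<le> k}"
      using syt2_column_less[OF assms] by fastforce
    then show ?thesis
      using count_list_take_tableau_path[OF assms _ that, of 0]
        count_list_take_tableau_path[OF assms _ that, of 1]
      by (simp add: card_mono)
  qed
  ultimately show ?thesis
    by (simp add: paths_def)
qed

lemma length_step_positions_path:
  "p \<in> paths N \<Longrightarrow> length (step_positions p b) = N"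
  by (cases b) (simp_all add: length_step_positions paths_def)

lemma path_right_step_before_down_step:
  assumes "p \<in> paths N" "j < N"
  shows "step_positions p True ! j < step_positions p False ! j"
proof (rule ccontr)
  \<comment> \<open>Otherwise the prefix ending with the j-th down step has j + 1 down steps
    but at most j right steps.\<close>
  let ?a = "step_positions p True ! j" and ?b = "step_positions p False ! j"
  assume "\<not> ?a < ?b"
  have a: "?a \<in> set (step_positions p True)" and b: "?b \<in> set (step_positions p False)"
    using assms by (simp_all add: length_step_positions_path)
  then have "?a \<noteq> ?b"
    by (auto simp: set_step_positions)
  with \<open>\<not> ?a < ?b\<close> have "Suc ?b \<le> ?a"
    by simp
  have "Suc ?b \<le> length p"
    using b by (simp add: set_step_positions)
  then have ballot: "count_list (take (Suc ?b) p) False \<le> count_list (take (Suc ?b) p) True"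
    using assms(1) by (simp add: paths_def)
  have "{l \<in> set (step_positions p False). l < Suc ?b}
      = insert ?b {l \<in> set (step_positions p False). l < ?b}"
    using b by auto
  then have "count_list (take (Suc ?b) p) False = Suc j"
    using \<open>Suc ?b \<le> length p\<close> assms
    by (simp add: count_list_take_step_positions card_less_nth_sorted sorted_step_positions
        length_step_positions_path)
  moreover have "count_list (take (Suc ?b) p) True \<le> card {l \<in> set (step_positions p True). l < ?a}"
    using \<open>Suc ?b \<le> length p\<close> \<open>Suc ?b \<le> ?a\<close>
    by (auto simp: count_list_take_step_positions intro!: card_mono)
  moreover have "card {l \<in> set (step_positions p True). l < ?a} = j"
    using assms by (simp add: card_less_nth_sorted sorted_step_positions length_step_positions_path)
  ultimately show False
    using ballot by simp
qed

definition path_tableau :: "nat \<Rightarrow> bool list \<Rightarrow> nat \<times> nat \<Rightarrow> nat" where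
  "path_tableau N p = (\<lambda>(r, j). if r < 2 \<and> j < N then Suc (step_positions p (r = 0) ! j) else 0)"

lemma row_entries_path_tableau:
  assumes "p \<in> paths N" "r < 2"
  shows "row_entries N (path_tableau N p) r = Suc ` set (step_positions p (r = 0))"
proof -
  have "row_entries N (path_tableau N p) r = Suc ` (\<lambda>j. step_positions p (r = 0) ! j) ` {..<N}"
    using assms(2) by (auto simp: row_entries_def path_tableau_def image_image)
  also have "(\<lambda>j. step_positions p (r = 0) ! j) ` {..<N} = set (step_positions p (r = 0))"
    using length_step_positions_path[OF assms(1)] by (auto simp: set_conv_nth)
  finally show ?thesis .
qed

lemma path_tableau_in_syt2:
  assumes "p \<in> paths N"
  shows "path_tableau N p \<in> syt2 N"
proof -
  let ?T = "path_tableau N p"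
  have "?T ` cells2 N = row_entries N ?T 0 \<union> row_entries N ?T 1"
    by (auto simp: row_entries_def cells2_eq)
  also have "\<dots> = Suc ` (set (step_positions p True) \<union> set (step_positions p False))"
    using assms by (simp add: row_entries_path_tableau image_Un)
  also have "set (step_positions p True) \<union> set (step_positions p False) = {..<2 * N}"
    using assms by (auto simp: set_step_positions paths_def)
  also have "Suc ` {..<2 * N} = {1..2 * N}"
    by (rule image_Suc_lessThan)
  finally have image: "?T ` cells2 N = {1..2 * N}" .
  then have "inj_on ?T (cells2 N)"
    by (intro eq_card_imp_inj_on) (simp_all add: cells2_eq card_cartesian_product)
  with image have "bij_betw ?T (cells2 N) {1..2 * N}"
    by (simp add: bij_betw_def)
  moreover have "?T (r, j) < ?T (r, Suc j)" if "r < 2" "Suc j < N" for r j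
    using that sorted_wrt_nth_less[OF sorted_step_positions, of j "Suc j" p "r = 0"]
    by (simp add: path_tableau_def length_step_positions_path[OF assms])
  moreover have "?T (0, j) < ?T (1, j)" if "j < N" for j
    using path_right_step_before_down_step[OF assms that] that by (simp add: path_tableau_def)
  ultimately show ?thesis
    by (auto simp: syt2_def path_tableau_def cells2_def)
qed

lemma tableau_path_path_tableau:
  assumes "p \<in> paths N"
  shows "tableau_path N (path_tableau N p) = p"
proof (rule nth_equalityI)
  show "length (tableau_path N (path_tableau N p)) = length p"
    using assms by (simp add: paths_def)
  fix k assume "k < length (tableau_path N (path_tableau N p))"
  then show "tableau_path N (path_tableau N p) ! k = p ! k"
    using assms
    by (simp add: tableau_path_def row_entries_path_tableau set_step_positions paths_def image_iff)
qed

lemma step_positions_tableau_path: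
  assumes "T \<in> syt2 N" "r < 2"
  shows "step_positions (tableau_path N T) (r = 0) = map (\<lambda>j. T (r, j) - 1) [0..<N]"
    (is "?s = ?m")
proof (rule sorted_distinct_set_unique)
  have "sorted_wrt (<) ?m"
    using syt2_row_less[OF assms] syt2_entry_range(1)[OF assms]
    by (auto simp: sorted_wrt_iff_nth_less intro!: diff_less_mono)
  then show "sorted ?m" "distinct ?m"
    by (simp_all add: strict_sorted_iff)
  show "sorted ?s" "distinct ?s"
    using sorted_step_positions by (simp_all add: strict_sorted_iff)
  have "set ?s = {k. k < 2 * N \<and> Suc k \<in> row_entries N T r}"
    using tableau_path_nth_eq_iff[OF assms] by (auto simp: set_step_positions)
  also have "\<dots> = (\<lambda>j. T (r, j) - 1) ` {..<N}"
    using syt2_entry_range(2)[OF assms] by (auto simp: syt2_row_shifted_entries[OF assms])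
  finally show "set ?s = set ?m"
    by (simp add: atLeast0LessThan)
qed

lemma path_tableau_tableau_path:
  assumes "T \<in> syt2 N"
  shows "path_tableau N (tableau_path N T) = T"
proof
  fix x :: "nat \<times> nat"
  obtain r j where x: "x = (r, j)"
    by fastforce
  show "path_tableau N (tableau_path N T) x = T x"
  proof (cases "r < 2 \<and> j < N")
    case True
    then show ?thesis
      using syt2_entry_range(1)[OF assms, of r j]
      by (simp add: x path_tableau_def step_positions_tableau_path[OF assms])
  next
    case False
    then show ?thesis
      using assms by (auto simp: x path_tableau_def syt2_def cells2_def)
  qed
qed

section \<open>Area above the path and inversions of the reading word\<close>

lemma length_reading_word [simp]: "length (reading_word N T) = 2 * N"
  by (simp add: reading_word_def)

lemma reading_word_nth:
  assumes "k < 2 * N"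
  shows "reading_word N T ! k = (if k < N then T (0, k) else T (1, k - N))"
proof (cases "k < N")
  case False
  with assms have "k - N < N"
    by simp
  with False show ?thesis
    by (simp add: reading_word_def nth_append del: upt_Suc)
qed (simp add: reading_word_def nth_append del: upt_Suc)

lemma reading_perm_eq_word_perm: "reading_perm N T = word_perm (reading_word N T)"
  by (simp add: reading_perm_def word_perm_def)

lemma set_reading_word:
  assumes "T \<in> syt2 N"
  shows "set (reading_word N T) = {1..2 * N}"
proof -
  have "set (reading_word N T) = row_entries N T 0 \<union> row_entries N T 1"
    by (simp add: reading_word_def row_entries_def atLeast0LessThan)
  then show ?thesis
    using syt2_rows_union[OF assms] by simp
qed

lemma distinct_reading_word:
  assumes "T \<in> syt2 N"
  shows "distinct (reading_word N T)"
  by (rule card_distinct) (simp add: set_reading_word[OF assms])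

lemma inversions_reading_word:
  assumes "T \<in> syt2 N"
  shows "inversions (reading_word N T)
    = (\<lambda>(j, i). (i, N + j)) ` (SIGMA j:{..<N}. {i. i < N \<and> T (1, j) < T (0, i)})"
proof (intro equalityI subsetI)
  fix x assume "x \<in> inversions (reading_word N T)"
  then obtain a b where x: "x = (a, b)" "a < b" "b < 2 * N" and
    inv: "reading_word N T ! b < reading_word N T ! a"
    by (auto simp: inversions_def reading_word_def)
  have "N \<le> b"
  proof (rule ccontr)
    assume "\<not> N \<le> b"
    then show False
      using inv x syt2_row_less[OF assms, of 0 a b] by (simp add: reading_word_nth)
  qed
  moreover have "a < N"
  proof (rule ccontr)
    assume "\<not> a < N"
    then have "a - N < b - N" "b - N < N"
      using x by auto
    then show False
      using inv x \<open>\<not> a < N\<close> syt2_row_less[OF assms, of 1 "a - N" "b - N"]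
      by (simp add: reading_word_nth)
  qed
  ultimately show "x \<in> (\<lambda>(j, i). (i, N + j)) ` (SIGMA j:{..<N}. {i. i < N \<and> T (1, j) < T (0, i)})"
    using inv x by (auto simp: reading_word_nth image_iff intro!: bexI[of _ "(b - N, a)"])
next
  fix x assume "x \<in> (\<lambda>(j, i). (i, N + j)) ` (SIGMA j:{..<N}. {i. i < N \<and> T (1, j) < T (0, i)})"
  then show "x \<in> inversions (reading_word N T)"
    by (auto simp: inversions_def reading_word_nth)
qed

lemma card_top_entries_above:
  assumes "T \<in> syt2 N" "j < N"
  shows "N - card {i. i < N \<and> T (0, i) \<le> T (1, j) - 1} = card {i. i < N \<and> T (1, j) < T (0, i)}"
proof -
  let ?below = "{i. i < N \<and> T (0, i) \<le> T (1, j) - 1}"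
    and ?above = "{i. i < N \<and> T (1, j) < T (0, i)}"
  have "T (0, i) \<noteq> T (1, j)" if "i < N" for i
    using syt2_rows_disjoint[OF assms(1)] that assms(2) by (auto simp: row_entries_def)
  then have "?below \<union> ?above = {..<N}"
    using syt2_entry_range(1)[OF assms(1), of 1 j] assms(2) by force
  moreover have "?below \<inter> ?above = {}"
    using syt2_entry_range(1)[OF assms(1), of 1 j] assms(2) by auto
  ultimately have "card ?below + card ?above = N"
    using card_Un_disjoint[of ?below ?above] by simp
  then show ?thesis
    by simp
qed

lemma area_above_tableau_path:
  assumes "T \<in> syt2 N"
  shows "area_above N (tableau_path N T) = card (inversions (reading_word N T))"
proof -
  let ?p = "tableau_path N T"
  have down_steps: "{k. k < length ?p \<and> \<not> ?p ! k} = (\<lambda>j. T (1, j) - 1) ` {..<N}"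
    using arg_cong[OF step_positions_tableau_path[OF assms, of 1], of set]
    by (simp add: set_step_positions atLeast0LessThan)
  have "area_above N ?p = (\<Sum>j<N. N - count_list (take (T (1, j) - 1) ?p) True)"
    unfolding area_above_def down_steps
    by (subst sum.reindex) (use syt2_row_shifted_inj[OF assms, of 1] in simp_all)
  also have "\<dots> = (\<Sum>j<N. card {i. i < N \<and> T (1, j) < T (0, i)})"
  proof (rule sum.cong)
    fix j assume "j \<in> {..<N}"
    then show "N - count_list (take (T (1, j) - 1) ?p) True = card {i. i < N \<and> T (1, j) < T (0, i)}"
      using count_list_take_tableau_path[OF assms, of 0 "T (1, j) - 1"]
        syt2_entry_range(2)[OF assms, of 1 j] card_top_entries_above[OF assms, of j]
      by simp
  qed simp
  also have "\<dots> = card (SIGMA j:{..<N}. {i. i < N \<and> T (1, j) < T (0, i)})"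
    by (simp add: card_SigmaI)
  also have "\<dots> = card (inversions (reading_word N T))"
    unfolding inversions_reading_word[OF assms]
    by (rule card_image[symmetric]) (auto simp: inj_on_def)
  finally show ?thesis .
qed

theorem lemma2p18:
  fixes c n :: nat
  assumes "odd c" "odd n" "c > 0" "n > c"
  defines "N \<equiv> n - c - 1"
  shows "\<exists>f. bij_betw f (syt2 N) (paths N) \<and>
           (\<forall>T \<in> syt2 N. even (area_above N (f T)) \<longleftrightarrow> evenperm (reading_perm N T))"
proof (intro exI conjI ballI)
  show "bij_betw (tableau_path N) (syt2 N) (paths N)"
    by (rule bij_betw_byWitness[where f' = "path_tableau N"])
      (auto simp: path_tableau_tableau_path tableau_path_path_tableau tableau_path_in_paths
        path_tableau_in_syt2)
  fix T assume "T \<in> syt2 N"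
  then show "even (area_above N (tableau_path N T)) \<longleftrightarrow> evenperm (reading_perm N T)"
    by (simp add: area_above_tableau_path reading_perm_eq_word_perm evenperm_word_perm_iff
        distinct_reading_word set_reading_word)
qed

end
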